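(* Let $\Gamma\subset U_+$ be a non-commutative, torsion-free complex Kleinian group and let $\Gamma_p$ be the subgroup of $\Gamma$ generated by all parabolic elements of $\Gamma$. Suppose $\Gamma_p$ is conjugate in $\mathrm{PSL}(3,\mathbb{C})$ to a group $$\Gamma^\ast_W=\{g_{x,y} : (x,y)\in W\},\qquad g_{x,y}=\begin{bmatrix}1&x&y\\0&1&0\\0&0&1\end{bmatrix},$$ for some discrete additive subgroup $W\subset\mathbb{C}^2$ with $\mathrm{rank}(W)\le 2$. Then $\Gamma_p$ is conjugate to one of the following groups: (i) $\Gamma_1=\langle g_{1,0},g_{0,1}\rangle$; (ii) $\Gamma_2=\langle g_{0,1},g_{0,y}\rangle$ with $y\notin\mathbb{R}$; (iii) $\Gamma_3=\langle g_{1,0},g_{x,0}\rangle$ with $x\notin\mathbb{R}$; (iv) $\Gamma_4=\langle g_{1,0}\rangle$; (v) $\Gamma_5=\langle g_{0,1}\rangle$.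
   Context: $U_+\subset\mathrm{PSL}(3,\mathbb{C})$ is the subgroup of elements admitting an upper triangular lift in $\mathrm{SL}(3,\mathbb{C})$. A complex Kleinian group is a discrete subgroup of $\mathrm{PSL}(3,\mathbb{C})$ acting properly discontinuously on some nonempty open invariant subset of $\mathbb{CP}^2$. An element of $\mathrm{PSL}(3,\mathbb{C})$ is parabolic if it has a non-diagonalizable lift in $\mathrm{SL}(3,\mathbb{C})$ all of whose eigenvalues have modulus $1$. Torsion-free means the only element of finite order is the identity. *)

theory Defs
  imports "HOL-Analysis.Analysis"
begin

text \<open>An element of PSL(3,C) is represented by any of its lifts in SL(3,C)
(3x3 complex matrices of determinant 1); a subgroup of PSL(3,C) is represented by its full
preimage in SL(3,C), i.e. a subgroup of SL(3,C) containing the centre (the scalar matrices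
with cube roots of unity). Indices of 3x3 matrices are 0,1,2 (row index first).
A point of CP^2 is a complex line in C^3; an open set of CP^2 is represented by its
preimage cone in C^3 minus the origin.\<close>

type_synonym cmat = "complex^3^3"
type_synonym cvec = "complex^3"

definition SL3 :: "cmat set" where
  "SL3 = {A. det A = 1}"

definition centre3 :: "cmat set" where
  "centre3 = {mat w | w. w ^ 3 = (1::complex)}"

fun mpow :: "cmat \<Rightarrow> nat \<Rightarrow> cmat" where
  "mpow A 0 = mat 1"
| "mpow A (Suc n) = A ** mpow A n"

definition psl_subgroup :: "cmat set \<Rightarrow> bool" where
  "psl_subgroup G \<longleftrightarrow> G \<subseteq> SL3 \<and> centre3 \<subseteq> G \<and>
     (\<forall>A\<in>G. \<forall>B\<in>G. A ** B \<in> G) \<and> (\<forall>A\<in>G. matrix_inv A \<in> G)"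

inductive_set psl_gen :: "cmat set \<Rightarrow> cmat set" for S where
  centre: "C \<in> centre3 \<Longrightarrow> C \<in> psl_gen S"
| gen: "A \<in> S \<Longrightarrow> A \<in> psl_gen S"
| mult: "A \<in> psl_gen S \<Longrightarrow> B \<in> psl_gen S \<Longrightarrow> A ** B \<in> psl_gen S"
| inv: "A \<in> psl_gen S \<Longrightarrow> matrix_inv A \<in> psl_gen S"

definition upper_tri :: "cmat \<Rightarrow> bool" where
  "upper_tri A \<longleftrightarrow> A$1$0 = 0 \<and> A$2$0 = 0 \<and> A$2$1 = 0"

text \<open>Gamma is contained in U_+: every element has an upper triangular lift in SL(3,C)
(equivalently every lift is upper triangular, since lifts differ by scalars).\<close>
definition in_Uplus :: "cmat set \<Rightarrow> bool" where
  "in_Uplus G \<longleftrightarrow> (\<forall>A\<in>G. \<exists>w::complex. w ^ 3 = 1 \<and> upper_tri (mat w ** A))"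

definition discrete_mats :: "cmat set \<Rightarrow> bool" where
  "discrete_mats G \<longleftrightarrow> (\<forall>A\<in>G. \<exists>e>0. \<forall>B\<in>G. dist B A < e \<longrightarrow> B = A)"

definition proj_open_cone :: "cvec set \<Rightarrow> bool" where
  "proj_open_cone Om \<longleftrightarrow> open Om \<and> 0 \<notin> Om \<and>
     (\<forall>x\<in>Om. \<forall>c::complex. c \<noteq> 0 \<longrightarrow> c *s x \<in> Om)"

definition invariant_cone :: "cmat set \<Rightarrow> cvec set \<Rightarrow> bool" where
  "invariant_cone G Om \<longleftrightarrow> (\<forall>A\<in>G. \<forall>x\<in>Om. A *v x \<in> Om)"

text \<open>Proper discontinuity on the projectivisation of Om: for each compact set (the images
in CP^2 of compact subsets of the cone are exactly the compact subsets of the projective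
open set) only finitely many group elements move it to meet itself.\<close>
definition prop_disc :: "cmat set \<Rightarrow> cvec set \<Rightarrow> bool" where
  "prop_disc G Om \<longleftrightarrow> (\<forall>K. compact K \<and> K \<subseteq> Om \<longrightarrow>
     finite {A\<in>G. \<exists>x\<in>K. \<exists>y\<in>K. \<exists>c::complex. A *v x = c *s y})"

definition complex_kleinian :: "cmat set \<Rightarrow> bool" where
  "complex_kleinian G \<longleftrightarrow> psl_subgroup G \<and> discrete_mats G \<and>
     (\<exists>Om. Om \<noteq> {} \<and> proj_open_cone Om \<and> invariant_cone G Om \<and> prop_disc G Om)"

definition noncommutative_psl :: "cmat set \<Rightarrow> bool" where
  "noncommutative_psl G \<longleftrightarrow> (\<exists>A\<in>G. \<exists>B\<in>G. \<forall>w::complex. w ^ 3 = 1 \<longrightarrow> A ** B \<noteq> mat w ** (B ** A))"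

definition torsion_free_psl :: "cmat set \<Rightarrow> bool" where
  "torsion_free_psl G \<longleftrightarrow> (\<forall>A\<in>G. \<forall>n>0. mpow A n \<in> centre3 \<longrightarrow> A \<in> centre3)"

definition diagonalizable3 :: "cmat \<Rightarrow> bool" where
  "diagonalizable3 A \<longleftrightarrow> (\<exists>P D :: cmat. invertible P \<and> (\<forall>i j. i \<noteq> j \<longrightarrow> D$i$j = 0) \<and>
     A = P ** D ** matrix_inv P)"

definition eigenvalue3 :: "cmat \<Rightarrow> complex \<Rightarrow> bool" where
  "eigenvalue3 A c \<longleftrightarrow> (\<exists>v. v \<noteq> 0 \<and> A *v v = c *s v)"

definition parabolic :: "cmat \<Rightarrow> bool" where
  "parabolic A \<longleftrightarrow> (\<exists>w::complex. w ^ 3 = 1 \<and> \<not> diagonalizable3 (mat w ** A) \<and>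
     (\<forall>c. eigenvalue3 (mat w ** A) c \<longrightarrow> norm c = 1))"

definition parabolic_subgroup :: "cmat set \<Rightarrow> cmat set" where
  "parabolic_subgroup G = psl_gen {A\<in>G. parabolic A}"

definition conjugate_psl :: "cmat set \<Rightarrow> cmat set \<Rightarrow> bool" where
  "conjugate_psl G H \<longleftrightarrow> (\<exists>P\<in>SL3. G = (\<lambda>A. P ** A ** matrix_inv P) ` H)"

definition gxy :: "complex \<Rightarrow> complex \<Rightarrow> cmat" where
  "gxy x y = (\<chi> i j. if i = j then 1 else if i = 0 \<and> j = 1 then x
                 else if i = 0 \<and> j = 2 then y else 0)"

definition Gamma_W :: "(complex \<times> complex) set \<Rightarrow> cmat set" where
  "Gamma_W W = {mat w ** gxy x y | w x y. w ^ 3 = 1 \<and> (x, y) \<in> W}"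

definition discrete_add_subgroup :: "(complex \<times> complex) set \<Rightarrow> bool" where
  "discrete_add_subgroup W \<longleftrightarrow> 0 \<in> W \<and> (\<forall>a\<in>W. \<forall>b\<in>W. a + b \<in> W) \<and> (\<forall>a\<in>W. - a \<in> W) \<and>
     (\<forall>a\<in>W. \<exists>e>0. \<forall>b\<in>W. dist b a < e \<longrightarrow> b = a)"

text \<open>A discrete subgroup of C^2 is free abelian; rank at most 2 means generated by two elements.\<close>
definition rank_le_2 :: "(complex \<times> complex) set \<Rightarrow> bool" where
  "rank_le_2 W \<longleftrightarrow> (\<exists>a b. W = {of_int m *\<^sub>R a + of_int n *\<^sub>R b | m n :: int. True})"

end

theory Submission
  imports Defs
begin

text \<open>Conjugating g_(x,y) by diag(l, B) with l * det B = 1 replaces (x,y) by l (x,y) B\<inverse>, so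
Gamma_W is conjugate to Gamma_(W M) for every M in GL(2,C), and only the GL(2,C)-orbit of the
lattice W = Z a + Z b matters. If a and b are C-linearly independent, W is moved to Z(1,0) + Z(0,1)
(case (i)). Otherwise b = z a. For z not real W is moved to Z(1,0) + Z(z,0) (case (iii)); for
z = t real, discreteness of W makes Z + Z t a discrete, hence cyclic, subgroup of R, so W is cyclic
and is moved to Z(1,0) (case (iv)). W = 0 is impossible: the commutator of two non-commuting
upper triangular elements of Gamma is unipotent and non-central, hence a parabolic element of
Gamma_p outside the centre. Cases (ii) and (v) are conjugate to (iii) and (iv) and never needed;
neither are torsion-freeness and proper discontinuity.\<close>

section \<open>Arithmetic of 3x3 matrices\<close>

lemma numeral_3_eq_0: "(3 :: 3) = 0"
  by simp

lemma UNIV_3_eq: "(UNIV :: 3 set) = {0, 1, 2}"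
proof (rule UNIV_eq_I)
  fix i :: 3
  show "i \<in> {0, 1, 2}"
    using exhaust_3[of i] numeral_3_eq_0 by auto
qed

lemma index_3_cases: "(i :: 3) = 0 \<or> i = 1 \<or> i = 2"
  using UNIV_3_eq by auto

lemma sum_UNIV_3: "sum f (UNIV :: 3 set) = f 0 + f 1 + f 2"
  unfolding UNIV_3_eq by (simp add: ac_simps)

lemma all_3: "(\<forall>i :: 3. P i) \<longleftrightarrow> P 0 \<and> P 1 \<and> P 2"
  by (metis UNIV_3_eq UNIV_I insertE singletonD)

lemma cmat_eq_iff: "(A :: cmat) = B \<longleftrightarrow> (\<forall>i j. A$i$j = B$i$j)"
  by (simp add: vec_eq_iff)

lemma matrix_mult_entry_3: "((A :: cmat) ** B)$i$j = A$i$0 * B$0$j + A$i$1 * B$1$j + A$i$2 * B$2$j"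
  by (simp add: matrix_matrix_mult_def sum_UNIV_3)

lemma matrix_vector_mult_entry_3: "((A :: cmat) *v v)$i = A$i$0 * v$0 + A$i$1 * v$1 + A$i$2 * v$2"
  by (simp add: matrix_vector_mult_def sum_UNIV_3)

lemma mat_entry: "(mat w :: cmat)$i$j = (if i = j then w else 0)"
  by (simp add: mat_def)

lemma mat_mult_eq: "mat w ** (A :: cmat) = (\<chi> i j. w * A$i$j)"
  unfolding cmat_eq_iff matrix_mult_entry_3 mat_entry all_3 by simp

lemma mult_mat_eq: "(A :: cmat) ** mat w = (\<chi> i j. A$i$j * w)"
  unfolding cmat_eq_iff matrix_mult_entry_3 mat_entry all_3 by simp

lemma mat_mult_commute: "mat w ** (A :: cmat) = A ** mat w"
  by (simp add: mat_mult_eq mult_mat_eq mult.commute)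

lemma mat_mult_mat: "mat a ** (mat b ** (A :: cmat)) = mat (a * b) ** A"
  by (simp add: mat_mult_eq mult.assoc)

lemma mult_mat_mult: "(A :: cmat) ** (mat w ** (B :: cmat)) = mat w ** (A ** B)"
proof -
  have "A ** (mat w ** B) = (A ** mat w) ** B"
    by (rule matrix_mul_assoc)
  also have "\<dots> = (mat w ** A) ** B"
    by (simp only: mat_mult_commute)
  also have "\<dots> = mat w ** (A ** B)"
    by (rule matrix_mul_assoc[symmetric])
  finally show ?thesis .
qed

lemma scaled_mult_scaled: "(mat a ** (A :: cmat)) ** (mat b ** (B :: cmat)) = mat (a * b) ** (A ** B)"
proof -
  have "(mat a ** A) ** (mat b ** B) = mat a ** (A ** (mat b ** B))"
    by (simp only: matrix_mul_assoc)
  also have "\<dots> = mat a ** (mat b ** (A ** B))"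
    by (subst mult_mat_mult) (rule refl)
  also have "\<dots> = mat (a * b) ** (A ** B)"
    by (rule mat_mult_mat)
  finally show ?thesis .
qed

lemma mat_mult_cancel:
  assumes "mat c ** (A :: cmat) = mat c ** B" "c \<noteq> 0"
  shows "A = B"
proof -
  have "mat (1 / c * c) ** A = mat (1 / c * c) ** B"
    by (simp only: mat_mult_mat[symmetric] assms(1))
  then show ?thesis
    using assms(2) by simp
qed

lemma matrix_inv_right_left:
  fixes A :: "'a::semiring_1^'n^'m"
  assumes "invertible A"
  shows "A ** matrix_inv A = mat 1 \<and> matrix_inv A ** A = mat 1"
  using assms unfolding invertible_def matrix_inv_def by (rule someI_ex)

lemma matrix_inv_right: "invertible A \<Longrightarrow> A ** matrix_inv A = mat 1"
  using matrix_inv_right_left by blast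

lemma matrix_inv_left: "invertible A \<Longrightarrow> matrix_inv A ** A = mat 1"
  using matrix_inv_right_left by blast

lemma matrix_inv_unique:
  fixes A :: "'a::semiring_1^'n^'m"
  assumes "A ** B = mat 1" "B ** A = mat 1"
  shows "matrix_inv A = B"
proof -
  have "invertible A"
    using assms by (auto simp: invertible_def)
  have "matrix_inv A = matrix_inv A ** (A ** B)"
    using assms(1) by simp
  also have "\<dots> = B"
    by (simp add: matrix_mul_assoc matrix_inv_left \<open>invertible A\<close>)
  finally show ?thesis .
qed

lemma matrix_inv_mult:
  fixes A B :: "'a::semiring_1^'n^'n"
  assumes "invertible A" "invertible B"
  shows "matrix_inv (A ** B) = matrix_inv B ** matrix_inv A"
proof (rule matrix_inv_unique)
  have "A ** B ** (matrix_inv B ** matrix_inv A) = A ** (B ** matrix_inv B) ** matrix_inv A"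
    by (simp add: matrix_mul_assoc)
  then show "A ** B ** (matrix_inv B ** matrix_inv A) = mat 1"
    using assms by (simp add: matrix_inv_right)
  have "matrix_inv B ** matrix_inv A ** (A ** B) = matrix_inv B ** (matrix_inv A ** A) ** B"
    by (simp add: matrix_mul_assoc)
  then show "matrix_inv B ** matrix_inv A ** (A ** B) = mat 1"
    using assms by (simp add: matrix_inv_left)
qed

lemma SL3_invertible: "A \<in> SL3 \<Longrightarrow> invertible A"
  by (simp add: SL3_def invertible_det_nz)

lemma SL3_mult: "A \<in> SL3 \<Longrightarrow> B \<in> SL3 \<Longrightarrow> A ** B \<in> SL3"
  by (simp add: SL3_def det_mul)

lemma conj_scaled: "(P :: cmat) ** (mat w ** A) ** R = mat w ** (P ** A ** R)"
  by (simp only: matrix_mul_assoc mat_mult_commute[of w P, symmetric])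

lemma conj_mat:
  assumes "invertible (P :: cmat)"
  shows "P ** mat w ** matrix_inv P = mat w"
  using conj_scaled[of P w "mat 1" "matrix_inv P"] assms by (simp add: matrix_inv_right)

lemma conjugate_psl_trans:
  assumes "conjugate_psl H K" "Q \<in> SL3" "K = (\<lambda>A. Q ** A ** matrix_inv Q) ` L"
  shows "conjugate_psl H L"
proof -
  obtain P where P: "P \<in> SL3" "H = (\<lambda>A. P ** A ** matrix_inv P) ` K"
    using assms(1) unfolding conjugate_psl_def by blast
  have "H = (\<lambda>A. P ** (Q ** A ** matrix_inv Q) ** matrix_inv P) ` L"
    using P(2) assms(3) by (simp add: image_image)
  also have "\<dots> = (\<lambda>A. (P ** Q) ** A ** matrix_inv (P ** Q)) ` L"
    by (simp add: matrix_inv_mult SL3_invertible P(1) assms(2) matrix_mul_assoc)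
  finally show ?thesis
    unfolding conjugate_psl_def using SL3_mult[OF P(1) assms(2)] by blast
qed

lemma conjugate_psl_centre3:
  assumes "conjugate_psl H centre3"
  shows "H = centre3"
proof -
  obtain P where P: "P \<in> SL3" "H = (\<lambda>A. P ** A ** matrix_inv P) ` centre3"
    using assms unfolding conjugate_psl_def by blast
  have "(\<lambda>A. P ** A ** matrix_inv P) ` centre3 = centre3"
    unfolding centre3_def image_def using conj_mat[OF SL3_invertible[OF P(1)]] by (auto; metis)
  then show ?thesis
    using P(2) by simp
qed

section \<open>The groups Gamma_W\<close>

definition gxy_vec :: "complex \<times> complex \<Rightarrow> cmat" where
  "gxy_vec u = gxy (fst u) (snd u)"

lemma gxy_vec_add: "gxy_vec u ** gxy_vec v = gxy_vec (u + v)"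
  unfolding gxy_vec_def gxy_def cmat_eq_iff all_3 matrix_mult_entry_3 by simp

lemma gxy_vec_zero: "gxy_vec 0 = mat 1"
  unfolding gxy_vec_def gxy_def cmat_eq_iff all_3 mat_entry by simp

lemma matrix_inv_gxy_vec: "matrix_inv (gxy_vec u) = gxy_vec (- u)"
  by (rule matrix_inv_unique) (simp_all add: gxy_vec_add gxy_vec_zero)

lemma Gamma_W_gxy_vec: "Gamma_W W = {mat w ** gxy_vec u | w u. w ^ 3 = 1 \<and> u \<in> W}"
  unfolding Gamma_W_def gxy_vec_def by force

lemma Gamma_W_zero: "Gamma_W {0} = centre3"
proof -
  have "Gamma_W {0} = {mat w ** gxy_vec 0 | w. w ^ 3 = 1}"
    unfolding Gamma_W_gxy_vec by blast
  then show ?thesis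
    by (simp add: gxy_vec_zero centre3_def)
qed

lemma scaled_gxy_vec_mult:
  "(mat w ** gxy_vec u) ** (mat w' ** gxy_vec v) = mat (w * w') ** gxy_vec (u + v)"
  by (simp add: scaled_mult_scaled gxy_vec_add)

lemma matrix_inv_scaled_gxy_vec:
  assumes "w \<noteq> 0"
  shows "matrix_inv (mat w ** gxy_vec u) = mat (1 / w) ** gxy_vec (- u)"
  by (rule matrix_inv_unique) (simp_all add: scaled_gxy_vec_mult gxy_vec_zero assms)

lemma psl_gen_least:
  assumes "centre3 \<subseteq> H" "S \<subseteq> H" "\<forall>A\<in>H. \<forall>B\<in>H. A ** B \<in> H" "\<forall>A\<in>H. matrix_inv A \<in> H"
  shows "psl_gen S \<subseteq> H"
proof
  fix A
  assume "A \<in> psl_gen S"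
  then show "A \<in> H"
    by induction (use assms in blast)+
qed

lemma Gamma_W_mult_closed:
  assumes "\<forall>u\<in>W. \<forall>v\<in>W. u + v \<in> W" "A \<in> Gamma_W W" "B \<in> Gamma_W W"
  shows "A ** B \<in> Gamma_W W"
proof -
  obtain w u w' v where "A = mat w ** gxy_vec u" "w ^ 3 = 1" "u \<in> W"
    and "B = mat w' ** gxy_vec v" "w' ^ 3 = 1" "v \<in> W"
    using assms(2,3) unfolding Gamma_W_gxy_vec by blast
  then have "A ** B = mat (w * w') ** gxy_vec (u + v)" "(w * w') ^ 3 = 1" "u + v \<in> W"
    using assms(1) by (simp_all add: scaled_gxy_vec_mult power_mult_distrib)
  then show ?thesis
    unfolding Gamma_W_gxy_vec by blast
qed

lemma Gamma_W_inv_closed: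
  assumes "\<forall>u\<in>W. - u \<in> W" "A \<in> Gamma_W W"
  shows "matrix_inv A \<in> Gamma_W W"
proof -
  obtain w u where "A = mat w ** gxy_vec u" "w ^ 3 = 1" "u \<in> W"
    using assms(2) unfolding Gamma_W_gxy_vec by blast
  moreover have "w \<noteq> 0"
    using \<open>w ^ 3 = 1\<close> by auto
  ultimately have "matrix_inv A = mat (1 / w) ** gxy_vec (- u)" "(1 / w) ^ 3 = 1" "- u \<in> W"
    using assms(1) by (simp_all add: matrix_inv_scaled_gxy_vec power_divide)
  then show ?thesis
    unfolding Gamma_W_gxy_vec by blast
qed

lemma gxy_vec_int_multiple_mem_psl_gen:
  assumes "gxy_vec u \<in> psl_gen S"
  shows "gxy_vec (of_int k *\<^sub>R u) \<in> psl_gen S"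
proof (induction k rule: int_induct[where k = 0])
  case base
  show ?case
    using psl_gen.centre[of "mat 1"] by (force simp: centre3_def gxy_vec_zero)
next
  case (step1 i)
  have "gxy_vec (of_int i *\<^sub>R u) ** gxy_vec u \<in> psl_gen S"
    using step1(2) assms by (rule psl_gen.mult)
  then show ?case
    by (simp add: gxy_vec_add algebra_simps)
next
  case (step2 i)
  have "gxy_vec (of_int i *\<^sub>R u) ** matrix_inv (gxy_vec u) \<in> psl_gen S"
    using step2(2) psl_gen.inv[OF assms] by (rule psl_gen.mult)
  then show ?case
    by (simp add: matrix_inv_gxy_vec gxy_vec_add algebra_simps)
qed

definition int_span2 :: "complex \<times> complex \<Rightarrow> complex \<times> complex \<Rightarrow> (complex \<times> complex) set" where
  "int_span2 a b = {of_int m *\<^sub>R a + of_int n *\<^sub>R b | m n :: int. True}"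

lemma int_span2_add:
  assumes "u \<in> int_span2 a b" "v \<in> int_span2 a b"
  shows "u + v \<in> int_span2 a b"
proof -
  obtain m n m' n' where "u = of_int m *\<^sub>R a + of_int n *\<^sub>R b" "v = of_int m' *\<^sub>R a + of_int n' *\<^sub>R b"
    using assms unfolding int_span2_def by blast
  then have "u + v = of_int (m + m') *\<^sub>R a + of_int (n + n') *\<^sub>R b"
    by (simp add: algebra_simps)
  then show ?thesis
    unfolding int_span2_def by blast
qed

lemma int_span2_uminus:
  assumes "u \<in> int_span2 a b"
  shows "- u \<in> int_span2 a b"
proof -
  obtain m n where "u = of_int m *\<^sub>R a + of_int n *\<^sub>R b"
    using assms unfolding int_span2_def by blast
  then have "- u = of_int (- m) *\<^sub>R a + of_int (- n) *\<^sub>R b"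
    by (simp add: algebra_simps)
  then show ?thesis
    unfolding int_span2_def by blast
qed

lemma int_span2_mem:
  "0 \<in> int_span2 a b" "a \<in> int_span2 a b" "b \<in> int_span2 a b"
proof -
  have "0 = of_int 0 *\<^sub>R a + of_int 0 *\<^sub>R b" "a = of_int 1 *\<^sub>R a + of_int 0 *\<^sub>R b"
    "b = of_int 0 *\<^sub>R a + of_int 1 *\<^sub>R b"
    by simp_all
  then show "0 \<in> int_span2 a b" "a \<in> int_span2 a b" "b \<in> int_span2 a b"
    unfolding int_span2_def by blast+
qed

lemma gxy_vec_mem_Gamma_W:
  assumes "u \<in> W"
  shows "gxy_vec u \<in> Gamma_W W"
proof -
  have "gxy_vec u = mat 1 ** gxy_vec u" "(1 :: complex) ^ 3 = 1"
    by simp_all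
  then show ?thesis
    unfolding Gamma_W_gxy_vec using assms by blast
qed

lemma centre3_subset_Gamma_W: "0 \<in> W \<Longrightarrow> centre3 \<subseteq> Gamma_W W"
  unfolding Gamma_W_zero[symmetric] Gamma_W_gxy_vec by blast

lemma psl_gen_gxy_vec_eq_Gamma_W: "psl_gen {gxy_vec a, gxy_vec b} = Gamma_W (int_span2 a b)"
proof
  show "psl_gen {gxy_vec a, gxy_vec b} \<subseteq> Gamma_W (int_span2 a b)"
    by (rule psl_gen_least)
      (simp_all add: centre3_subset_Gamma_W gxy_vec_mem_Gamma_W int_span2_mem
        Gamma_W_mult_closed Gamma_W_inv_closed int_span2_add int_span2_uminus)
  show "Gamma_W (int_span2 a b) \<subseteq> psl_gen {gxy_vec a, gxy_vec b}"
  proof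
    fix A
    assume "A \<in> Gamma_W (int_span2 a b)"
    then obtain w m n where A: "A = mat w ** (gxy_vec (of_int m *\<^sub>R a) ** gxy_vec (of_int n *\<^sub>R b))"
      and "w ^ 3 = 1"
      unfolding Gamma_W_gxy_vec int_span2_def by (auto simp: gxy_vec_add)
    then have "mat w \<in> centre3"
      unfolding centre3_def by blast
    then have "mat w \<in> psl_gen {gxy_vec a, gxy_vec b}"
      by (rule psl_gen.centre)
    moreover have "gxy_vec (of_int m *\<^sub>R a) \<in> psl_gen {gxy_vec a, gxy_vec b}"
      "gxy_vec (of_int n *\<^sub>R b) \<in> psl_gen {gxy_vec a, gxy_vec b}"
      by (auto intro: gxy_vec_int_multiple_mem_psl_gen psl_gen.gen)
    ultimately show "A \<in> psl_gen {gxy_vec a, gxy_vec b}"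
      unfolding A by (intro psl_gen.mult)
  qed
qed

section \<open>Linear changes of coordinates\<close>

definition det2 :: "complex \<times> complex \<Rightarrow> complex \<times> complex \<Rightarrow> complex" where
  "det2 a d = fst a * snd d - snd a * fst d"

definition lin_map :: "complex \<times> complex \<Rightarrow> complex \<times> complex \<Rightarrow> complex \<times> complex \<Rightarrow> complex \<times> complex"
  where "lin_map a d u = (fst u * fst a + snd u * fst d, fst u * snd a + snd u * snd d)"

lemma lin_map_scaleR_add: "lin_map a d (r *\<^sub>R u + s *\<^sub>R v) = r *\<^sub>R lin_map a d u + s *\<^sub>R lin_map a d v"
  by (simp add: lin_map_def scaleR_conv_of_real algebra_simps)

lemma lin_map_int_span2: "lin_map a d ` int_span2 e f = int_span2 (lin_map a d e) (lin_map a d f)"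
  unfolding int_span2_def lin_map_scaleR_add[symmetric] by blast

lemma complex_nth_root_exists:
  assumes "n > 0"
  shows "\<exists>l :: complex. l ^ n = z"
proof (cases "z = 0")
  case True
  then show ?thesis
    using assms by auto
next
  case False
  have "exp (Ln z / of_nat n) ^ n = exp (of_nat n * (Ln z / of_nat n))"
    by (simp only: exp_of_nat_mult)
  also have "\<dots> = z"
    using assms False by simp
  finally show ?thesis ..
qed

lemma SL3_conj_gxy_vec_lin_map:
  assumes "det2 a d \<noteq> 0"
  shows "\<exists>Q\<in>SL3. \<forall>u. Q ** gxy_vec u ** matrix_inv Q = gxy_vec (lin_map a d u)"
proof -
  obtain a1 a2 d1 d2 where ad: "a = (a1, a2)" "d = (d1, d2)"
    by (cases a, cases d)
  define \<delta> where "\<delta> = a1 * d2 - a2 * d1"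
  have \<delta>: "\<delta> \<noteq> 0"
    using assms by (simp add: ad det2_def \<delta>_def)
  obtain l where l: "l ^ 3 = \<delta>"
    using complex_nth_root_exists[of 3] by auto
  define \<mu> where "\<mu> = l / \<delta>"
  \<comment> \<open>Q = diag(l, \<mu> M) with M the adjugate of the matrix with rows a and d conjugates
    g_u to g_v with v = (l / \<mu>) u M\<inverse> = lin_map a d u; the choice l ^ 3 = \<delta> makes det Q = 1\<close>
  define Q :: cmat where "Q = (\<chi> i j. if i = 0 \<and> j = 0 then l
    else if i = 1 \<and> j = 1 then \<mu> * d2 else if i = 1 \<and> j = 2 then - \<mu> * a2
    else if i = 2 \<and> j = 1 then - \<mu> * d1 else if i = 2 \<and> j = 2 then \<mu> * a1 else 0)"
  have Q_entries: "Q$0$0 = l" "Q$0$1 = 0" "Q$0$2 = 0" "Q$1$0 = 0" "Q$1$1 = \<mu> * d2"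
    "Q$1$2 = - \<mu> * a2" "Q$2$0 = 0" "Q$2$1 = - \<mu> * d1" "Q$2$2 = \<mu> * a1"
    by (simp_all add: Q_def)
  have "det Q = l * \<mu>\<^sup>2 * \<delta>"
    unfolding det_3 numeral_3_eq_0 Q_entries \<delta>_def by (simp add: algebra_simps power2_eq_square)
  also have "\<dots> = 1"
    using l \<delta> by (simp add: \<mu>_def power2_eq_square power3_eq_cube field_simps)
  finally have "Q \<in> SL3"
    by (simp add: SL3_def)
  have "l = \<mu> * \<delta>"
    using \<delta> by (simp add: \<mu>_def)
  then have l_eq: "l = \<mu> * a1 * d2 - \<mu> * a2 * d1"
    by (simp add: \<delta>_def algebra_simps)
  have intertwine: "Q ** gxy_vec u = gxy_vec (lin_map a d u) ** Q" for u
    unfolding cmat_eq_iff all_3 matrix_mult_entry_3 gxy_vec_def gxy_def lin_map_def ad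
    by (simp add: Q_entries l_eq algebra_simps)
  have "Q ** gxy_vec u ** matrix_inv Q = gxy_vec (lin_map a d u)" for u
    using matrix_inv_right[OF SL3_invertible[OF \<open>Q \<in> SL3\<close>]]
    by (simp add: intertwine matrix_mul_assoc[symmetric])
  then show ?thesis
    using \<open>Q \<in> SL3\<close> by blast
qed

lemma conj_image_Gamma_W:
  assumes "\<forall>u. Q ** gxy_vec u ** matrix_inv Q = gxy_vec (f u)"
  shows "(\<lambda>A. Q ** A ** matrix_inv Q) ` Gamma_W V = Gamma_W (f ` V)"
proof -
  have conj: "Q ** (mat w ** gxy_vec u) ** matrix_inv Q = mat w ** gxy_vec (f u)" for w u
    by (simp add: conj_scaled assms)
  show ?thesis
  proof (intro set_eqI iffI)
    fix A
    assume "A \<in> (\<lambda>A. Q ** A ** matrix_inv Q) ` Gamma_W V"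
    then obtain w u where "A = Q ** (mat w ** gxy_vec u) ** matrix_inv Q" "w ^ 3 = 1" "u \<in> V"
      unfolding Gamma_W_gxy_vec by blast
    then show "A \<in> Gamma_W (f ` V)"
      unfolding Gamma_W_gxy_vec conj by blast
  next
    fix A
    assume "A \<in> Gamma_W (f ` V)"
    then obtain w u where "A = Q ** (mat w ** gxy_vec u) ** matrix_inv Q" "w ^ 3 = 1" "u \<in> V"
      unfolding Gamma_W_gxy_vec conj by blast
    then show "A \<in> (\<lambda>A. Q ** A ** matrix_inv Q) ` Gamma_W V"
      unfolding Gamma_W_gxy_vec by blast
  qed
qed

lemma conjugate_psl_change_basis:
  assumes "conjugate_psl H (Gamma_W (int_span2 (lin_map a d e) (lin_map a d f)))" "det2 a d \<noteq> 0"
  shows "conjugate_psl H (psl_gen {gxy_vec e, gxy_vec f})"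
proof -
  obtain Q where Q: "Q \<in> SL3" "\<forall>u. Q ** gxy_vec u ** matrix_inv Q = gxy_vec (lin_map a d u)"
    using SL3_conj_gxy_vec_lin_map[OF assms(2)] by blast
  have "Gamma_W (int_span2 (lin_map a d e) (lin_map a d f))
      = (\<lambda>A. Q ** A ** matrix_inv Q) ` Gamma_W (int_span2 e f)"
    unfolding conj_image_Gamma_W[OF Q(2)] lin_map_int_span2 ..
  then show ?thesis
    using conjugate_psl_trans[OF assms(1) \<open>Q \<in> SL3\<close>] by (simp add: psl_gen_gxy_vec_eq_Gamma_W)
qed

section \<open>Discrete subgroups of the real line\<close>

lemma discrete_real_subgroup_least_pos:
  fixes S :: "real set"
  assumes diff: "\<And>x y. x \<in> S \<Longrightarrow> y \<in> S \<Longrightarrow> x - y \<in> S"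
    and sep: "e > 0" "\<And>x. x \<in> S \<Longrightarrow> x \<noteq> 0 \<Longrightarrow> e \<le> \<bar>x\<bar>"
    and pos: "x \<in> S" "x > 0"
  obtains s where "s \<in> S" "s > 0" "\<And>x. x \<in> S \<Longrightarrow> 0 < x \<Longrightarrow> s \<le> x"
proof -
  define P where "P = {x \<in> S. 0 < x}"
  have P: "P \<noteq> {}" "bdd_below P"
    using pos unfolding P_def by (auto intro: bdd_belowI[of _ 0])
  define s where "s = Inf P"
  have s_le: "s \<le> x" if "x \<in> P" for x
    unfolding s_def using that P(2) by (rule cInf_lower)
  have "e \<le> x" if "x \<in> P" for x
    using sep(2)[of x] that unfolding P_def by auto
  then have "e \<le> s"
    unfolding s_def using P(1) by (intro cInf_greatest)
  have "s \<in> S"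
  proof (rule ccontr)
    assume "s \<notin> S"
    have "Inf P < s + e"
      using sep(1) unfolding s_def by simp
    then obtain y where y: "y \<in> P" "y < s + e"
      using cInf_less_iff[OF P] unfolding s_def by blast
    have "s \<noteq> y"
      using y(1) \<open>s \<notin> S\<close> unfolding P_def by blast
    then have "s < y"
      using s_le[OF y(1)] by simp
    then obtain x where x: "x \<in> P" "x < y"
      using cInf_less_iff[OF P] unfolding s_def by blast
    have "y - x \<in> S" "y - x \<noteq> 0"
      using x y diff unfolding P_def by auto
    moreover have "\<bar>y - x\<bar> < e"
      using x y s_le[OF x(1)] by auto
    ultimately show False
      using sep(2) by force
  qed
  then show ?thesis
    using that \<open>e \<le> s\<close> sep(1) s_le unfolding P_def by auto
qed

lemma discrete_real_subgroup_cyclic: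
  fixes S :: "real set"
  assumes zero: "0 \<in> S" and diff: "\<And>x y. x \<in> S \<Longrightarrow> y \<in> S \<Longrightarrow> x - y \<in> S"
    and sep: "e > 0" "\<And>x. x \<in> S \<Longrightarrow> x \<noteq> 0 \<Longrightarrow> e \<le> \<bar>x\<bar>"
  shows "\<exists>s. S = range (\<lambda>k :: int. of_int k * s)"
proof (cases "S \<subseteq> {0}")
  case True
  then show ?thesis
    using zero by (intro exI[of _ 0]) auto
next
  case False
  then obtain x where "x \<in> S" "x \<noteq> 0"
    by blast
  then have "\<bar>x\<bar> \<in> S" "\<bar>x\<bar> > 0"
    using diff[OF zero] by (auto simp: abs_if)
  then obtain s where s: "s \<in> S" "s > 0" and least: "\<And>x. x \<in> S \<Longrightarrow> 0 < x \<Longrightarrow> s \<le> x"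
    using discrete_real_subgroup_least_pos[OF diff sep] by blast
  have multiple: "of_int k * s \<in> S" for k
  proof (induction k rule: int_induct[where k = 0])
    case (step1 i)
    then show ?case
      using diff[OF step1(2) diff[OF zero s(1)]] by (simp add: algebra_simps)
  next
    case (step2 i)
    then show ?case
      using diff[OF step2(2) s(1)] by (simp add: algebra_simps)
  qed (simp add: zero)
  have "x \<in> range (\<lambda>k :: int. of_int k * s)" if "x \<in> S" for x
  proof -
    define k where "k = \<lfloor>x / s\<rfloor>"
    have "of_int k \<le> x / s" "x / s < of_int k + 1"
      unfolding k_def by linarith+
    then have "0 \<le> x - of_int k * s" "x - of_int k * s < s"
      using s(2) by (simp_all add: field_simps)
    moreover have "x - of_int k * s \<in> S"
      using diff[OF that multiple] .
    ultimately have "x = of_int k * s"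
      using least by force
    then show ?thesis
      by blast
  qed
  then show ?thesis
    using multiple by blast
qed

section \<open>Normal forms of the lattice W\<close>

lemma int_span2_self: "int_span2 c c = range (\<lambda>k :: int. of_int k *\<^sub>R c)"
proof (intro set_eqI iffI)
  fix x
  assume "x \<in> int_span2 c c"
  then obtain m n :: int where "x = of_int m *\<^sub>R c + of_int n *\<^sub>R c"
    unfolding int_span2_def by blast
  then have "x = of_int (m + n) *\<^sub>R c"
    by (simp add: scaleR_left_distrib)
  then show "x \<in> range (\<lambda>k :: int. of_int k *\<^sub>R c)"
    by blast
next
  fix x
  assume "x \<in> range (\<lambda>k :: int. of_int k *\<^sub>R c)"
  then obtain k :: int where "x = of_int k *\<^sub>R c + of_int 0 *\<^sub>R c"
    by auto
  then show "x \<in> int_span2 c c"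
    unfolding int_span2_def by blast
qed

lemma int_span2_zero_left: "int_span2 0 c = range (\<lambda>k :: int. of_int k *\<^sub>R c)"
  unfolding int_span2_def by auto

lemma int_span2_real_multiple_cyclic:
  assumes "discrete_add_subgroup (int_span2 a (t *\<^sub>R a))"
  shows "\<exists>c. int_span2 a (t *\<^sub>R a) = range (\<lambda>k :: int. of_int k *\<^sub>R c)"
proof (cases "a = 0")
  case True
  then have "int_span2 a (t *\<^sub>R a) = range (\<lambda>k :: int. of_int k *\<^sub>R 0)"
    by (simp add: int_span2_zero_left)
  then show ?thesis ..
next
  case False
  define S where "S = {of_int m + of_int n * t | m n :: int. True}"
  have "int_span2 a (t *\<^sub>R a) = {(of_int m + of_int n * t) *\<^sub>R a | m n :: int. True}"
    by (simp add: int_span2_def scaleR_left_distrib)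
  also have "\<dots> = (\<lambda>r. r *\<^sub>R a) ` S"
    unfolding S_def by blast
  finally have W_eq: "int_span2 a (t *\<^sub>R a) = (\<lambda>r. r *\<^sub>R a) ` S" .
  obtain e where "e > 0" and e: "\<forall>w\<in>int_span2 a (t *\<^sub>R a). dist w 0 < e \<longrightarrow> w = 0"
    using assms int_span2_mem(1) unfolding discrete_add_subgroup_def by blast
  have "(0 :: real) = of_int 0 + of_int 0 * t"
    by simp
  then have zero: "0 \<in> S"
    unfolding S_def by blast
  have diff: "x - y \<in> S" if xy: "x \<in> S" "y \<in> S" for x y
  proof -
    obtain m n m' n' where "x = of_int m + of_int n * t" "y = of_int m' + of_int n' * t"
      using xy unfolding S_def by blast
    then have "x - y = of_int (m - m') + of_int (n - n') * t"
      by (simp add: algebra_simps)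
    then show ?thesis
      unfolding S_def by blast
  qed
  have "e / norm a > 0"
    using \<open>e > 0\<close> False by simp
  moreover have "e / norm a \<le> \<bar>x\<bar>" if "x \<in> S" "x \<noteq> 0" for x
  proof -
    have "\<not> dist (x *\<^sub>R a) 0 < e"
      using e that False W_eq by auto
    then show ?thesis
      using False by (simp add: divide_le_eq)
  qed
  ultimately obtain s where "S = range (\<lambda>k :: int. of_int k * s)"
    using discrete_real_subgroup_cyclic[OF zero diff] by blast
  then have "int_span2 a (t *\<^sub>R a) = range (\<lambda>k :: int. of_int k *\<^sub>R (s *\<^sub>R a))"
    unfolding W_eq by auto
  then show ?thesis ..
qed

lemma lin_map_basis:
  "lin_map a d (1, 0) = a" "lin_map a d (0, 1) = d" "lin_map a d (z, 0) = (z * fst a, z * snd a)"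
  by (simp_all add: lin_map_def)

lemma exists_det2_ne_zero:
  assumes "c \<noteq> 0"
  shows "\<exists>d. det2 c d \<noteq> 0"
proof (cases "fst c = 0")
  case True
  then have "snd c \<noteq> 0"
    using assms by (simp add: prod_eq_iff)
  then show ?thesis
    using True by (intro exI[of _ "(1, 0)"]) (simp add: det2_def)
next
  case False
  then show ?thesis
    by (intro exI[of _ "(0, 1)"]) (simp add: det2_def)
qed

lemma det2_eq_zero_imp_multiple:
  assumes "det2 a b = 0" "a \<noteq> 0"
  shows "\<exists>z. b = (z * fst a, z * snd a)"
proof (cases "fst a = 0")
  case True
  then have "snd a \<noteq> 0" "fst b = 0"
    using assms by (auto simp: det2_def prod_eq_iff)
  then have "b = (snd b / snd a * fst a, snd b / snd a * snd a)"
    using True by (simp add: prod_eq_iff)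
  then show ?thesis ..
next
  case False
  then have "b = (fst b / fst a * fst a, fst b / fst a * snd a)"
    using assms(1) by (simp add: prod_eq_iff det2_def field_simps)
  then show ?thesis ..
qed

lemma conjugate_psl_Gamma_W_cyclic:
  assumes "conjugate_psl H (Gamma_W (range (\<lambda>k :: int. of_int k *\<^sub>R c)))" "c \<noteq> 0"
  shows "conjugate_psl H (psl_gen {gxy 1 0})"
proof -
  obtain d where d: "det2 c d \<noteq> 0"
    using exists_det2_ne_zero[OF assms(2)] ..
  have "conjugate_psl H (Gamma_W (int_span2 (lin_map c d (1, 0)) (lin_map c d (1, 0))))"
    using assms(1) by (simp add: lin_map_basis int_span2_self)
  then have "conjugate_psl H (psl_gen {gxy_vec (1, 0), gxy_vec (1, 0)})"
    using d by (rule conjugate_psl_change_basis)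
  then show ?thesis
    by (simp add: gxy_vec_def)
qed

lemma conjugate_psl_Gamma_W_independent:
  assumes "conjugate_psl H (Gamma_W (int_span2 a b))" "det2 a b \<noteq> 0"
  shows "conjugate_psl H (psl_gen {gxy 1 0, gxy 0 1})"
proof -
  have "conjugate_psl H (psl_gen {gxy_vec (1, 0), gxy_vec (0, 1)})"
    using conjugate_psl_change_basis[of H a b] assms by (simp add: lin_map_basis)
  then show ?thesis
    by (simp add: gxy_vec_def)
qed

lemma conjugate_psl_Gamma_W_dependent:
  assumes "conjugate_psl H (Gamma_W (int_span2 a b))" "discrete_add_subgroup (int_span2 a b)"
    and "int_span2 a b \<noteq> {0}" "det2 a b = 0"
  shows "(\<exists>x. x \<notin> \<real> \<and> conjugate_psl H (psl_gen {gxy 1 0, gxy x 0}))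
    \<or> conjugate_psl H (psl_gen {gxy 1 0})"
proof -
  have cyclic: "conjugate_psl H (psl_gen {gxy 1 0})"
    if W: "int_span2 a b = range (\<lambda>k :: int. of_int k *\<^sub>R c)" for c
  proof (rule conjugate_psl_Gamma_W_cyclic)
    show "conjugate_psl H (Gamma_W (range (\<lambda>k :: int. of_int k *\<^sub>R c)))"
      using assms(1) W by simp
    show "c \<noteq> 0"
      using assms(3) W by auto
  qed
  show ?thesis
  proof (cases "a = 0")
    case True
    then show ?thesis
      using cyclic int_span2_zero_left by blast
  next
    case False
    then obtain z where z: "b = (z * fst a, z * snd a)"
      using det2_eq_zero_imp_multiple assms(4) by blast
    show ?thesis
    proof (cases "z \<in> \<real>")
      case True
      then obtain t where "b = t *\<^sub>R a"
        using z by (auto elim!: Reals_cases simp: prod_eq_iff scaleR_conv_of_real)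
      then show ?thesis
        using int_span2_real_multiple_cyclic assms(2) cyclic by blast
    next
      case False
      obtain d where d: "det2 a d \<noteq> 0"
        using exists_det2_ne_zero[OF \<open>a \<noteq> 0\<close>] ..
      have "conjugate_psl H (Gamma_W (int_span2 (lin_map a d (1, 0)) (lin_map a d (z, 0))))"
        using assms(1) z by (simp add: lin_map_basis)
      then have "conjugate_psl H (psl_gen {gxy_vec (1, 0), gxy_vec (z, 0)})"
        using d by (rule conjugate_psl_change_basis)
      then show ?thesis
        using False by (auto simp: gxy_vec_def)
    qed
  qed
qed

section \<open>Parabolic commutators\<close>

definition unitriangular :: "cmat \<Rightarrow> bool" where
  "unitriangular C \<longleftrightarrow> upper_tri C \<and> C$0$0 = 1 \<and> C$1$1 = 1 \<and> C$2$2 = 1"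

lemma unitriangular_eigenvalue:
  assumes "unitriangular C" "C *v v = c *s v" "v \<noteq> 0"
  shows "c = 1"
proof (rule ccontr)
  assume "c \<noteq> 1"
  have row: "(C *v v)$i = c * v$i" for i
    using assms(2) by simp
  have "v$2 = c * v$2"
    using row[of 2] assms(1) by (simp add: matrix_vector_mult_entry_3 unitriangular_def upper_tri_def)
  then have "v$2 = 0"
    using \<open>c \<noteq> 1\<close> by (metis mult_cancel_right2)
  then have "v$1 = c * v$1"
    using row[of 1] assms(1) by (simp add: matrix_vector_mult_entry_3 unitriangular_def upper_tri_def)
  then have "v$1 = 0"
    using \<open>c \<noteq> 1\<close> by (metis mult_cancel_right2)
  with \<open>v$2 = 0\<close> have "v$0 = c * v$0"
    using row[of 0] assms(1) by (simp add: matrix_vector_mult_entry_3 unitriangular_def upper_tri_def)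
  then have "v$0 = 0"
    using \<open>c \<noteq> 1\<close> by (metis mult_cancel_right2)
  with \<open>v$1 = 0\<close> \<open>v$2 = 0\<close> have "v = 0"
    by (simp add: vec_eq_iff all_3)
  then show False
    using assms(3) by contradiction
qed

lemma diagonal_mult_axis:
  assumes "\<forall>i j. i \<noteq> j \<longrightarrow> (D :: cmat)$i$j = 0"
  shows "D *v axis i 1 = D$i$i *s axis i 1"
  using assms by (auto simp: vec_eq_iff matrix_vector_mult_def axis_def sum.delta' if_distrib cong: if_cong)

lemma unitriangular_not_diagonalizable:
  assumes "unitriangular C" "C \<noteq> mat 1"
  shows "\<not> diagonalizable3 C"
proof
  assume "diagonalizable3 C"
  then obtain P D :: cmat where P: "invertible P" and D: "\<forall>i j. i \<noteq> j \<longrightarrow> D$i$j = 0"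
    and C: "C = P ** D ** matrix_inv P"
    unfolding diagonalizable3_def by blast
  have "C ** P = P ** D"
    unfolding C using matrix_inv_left[OF P] by (simp add: matrix_mul_assoc[symmetric])
  have "D$i$i = 1" for i
  proof (rule unitriangular_eigenvalue[OF assms(1)])
    show "C *v (P *v axis i 1) = D$i$i *s (P *v axis i 1)"
      by (simp add: matrix_vector_mul_assoc \<open>C ** P = P ** D\<close>
          matrix_vector_mul_assoc[symmetric] diagonal_mult_axis[OF D] vector_scalar_commute)
    show "P *v axis i 1 \<noteq> 0"
      using inj_matrix_vector_mult[OF P] by (metis axis_eq_0_iff injD matrix_vector_mult_0_right one_neq_zero)
  qed
  then have "D = mat 1"
    using D by (simp add: vec_eq_iff mat_def)
  then show False
    using assms(2) matrix_inv_right[OF P] C by simp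
qed

lemma unitriangular_parabolic:
  assumes "unitriangular C" "C \<noteq> mat 1"
  shows "parabolic C"
proof -
  have "norm c = 1" if ev: "eigenvalue3 (mat 1 ** C) c" for c
  proof -
    obtain v where "C *v v = c *s v" "v \<noteq> 0"
      using ev unfolding eigenvalue3_def by auto
    then have "c = 1"
      by (rule unitriangular_eigenvalue[OF assms(1)])
    then show ?thesis
      by simp
  qed
  moreover have "\<not> diagonalizable3 (mat 1 ** C)"
    using unitriangular_not_diagonalizable[OF assms] by simp
  ultimately show ?thesis
    unfolding parabolic_def by (intro exI[of _ 1]) simp
qed

lemma upper_tri_mult: "upper_tri A \<Longrightarrow> upper_tri B \<Longrightarrow> upper_tri (A ** B)"
  by (simp add: upper_tri_def matrix_mult_entry_3)

lemma upper_tri_mult_diag: "upper_tri A \<Longrightarrow> upper_tri B \<Longrightarrow> (A ** B)$i$i = A$i$i * B$i$i"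
  using index_3_cases[of i] by (auto simp: upper_tri_def matrix_mult_entry_3)

lemma upper_tri_matrix_inv:
  assumes "upper_tri U" "invertible U"
  shows "upper_tri (matrix_inv U) \<and> (\<forall>i. matrix_inv U$i$i * U$i$i = 1)"
proof -
  define V where "V = matrix_inv U"
  have VU: "(V ** U)$i$j = (if i = j then 1 else 0)" for i j
    using matrix_inv_left[OF assms(2)] by (simp add: V_def mat_entry)
  have U: "U$1$0 = 0" "U$2$0 = 0" "U$2$1 = 0"
    using assms(1) unfolding upper_tri_def by auto
  have "det U \<noteq> 0"
    using assms(2) by (simp add: invertible_det_nz)
  then have "U$0$0 \<noteq> 0" "U$1$1 \<noteq> 0"
    unfolding det_3 numeral_3_eq_0 U by auto
  have "V$1$0 * U$0$0 = 0" "V$2$0 * U$0$0 = 0"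
    using VU[of 1 0] VU[of 2 0] U by (simp_all add: matrix_mult_entry_3)
  then have V0: "V$1$0 = 0" "V$2$0 = 0"
    using \<open>U$0$0 \<noteq> 0\<close> by simp_all
  then have "V$2$1 * U$1$1 = 0"
    using VU[of 2 1] U by (simp add: matrix_mult_entry_3)
  then have V1: "V$2$1 = 0"
    using \<open>U$1$1 \<noteq> 0\<close> by simp
  have "V$i$i * U$i$i = 1" for i
    using VU[of i i] V0 V1 U index_3_cases[of i] by (auto simp: matrix_mult_entry_3)
  then show ?thesis
    using V0 V1 unfolding V_def upper_tri_def by simp
qed

lemma commutator_unitriangular:
  assumes "upper_tri A" "upper_tri B" "invertible A" "invertible B"
  shows "unitriangular (A ** B ** matrix_inv A ** matrix_inv B)"
proof -
  note A' = upper_tri_matrix_inv[OF assms(1,3)] and B' = upper_tri_matrix_inv[OF assms(2,4)]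
  have tri: "upper_tri (A ** B)" "upper_tri (A ** B ** matrix_inv A)"
    "upper_tri (A ** B ** matrix_inv A ** matrix_inv B)"
    using assms A' B' by (auto intro!: upper_tri_mult)
  have "(A ** B ** matrix_inv A ** matrix_inv B)$i$i
      = (matrix_inv A$i$i * A$i$i) * (matrix_inv B$i$i * B$i$i)" for i
  proof -
    have "(A ** B ** matrix_inv A ** matrix_inv B)$i$i
        = A$i$i * B$i$i * matrix_inv A$i$i * matrix_inv B$i$i"
      using tri assms(1,2) A'[THEN conjunct1] B'[THEN conjunct1] by (simp add: upper_tri_mult_diag)
    then show ?thesis
      by (simp only: ac_simps)
  qed
  then show ?thesis
    unfolding unitriangular_def using tri(3) A' B' by simp
qed

lemma commutator_mult_swap:
  assumes "invertible A" "invertible B"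
  shows "(A ** B ** matrix_inv A ** matrix_inv B) ** (B ** A) = A ** B"
proof -
  have "(A ** B ** matrix_inv A ** matrix_inv B) ** (B ** A)
      = A ** B ** matrix_inv A ** (matrix_inv B ** B) ** A"
    by (simp only: matrix_mul_assoc)
  also have "\<dots> = A ** B ** (matrix_inv A ** A)"
    by (simp add: matrix_inv_left assms(2) matrix_mul_assoc)
  finally show ?thesis
    by (simp add: matrix_inv_left assms(1))
qed

lemma noncommutative_upper_tri_pair:
  assumes "psl_subgroup G" "in_Uplus G" "noncommutative_psl G"
  obtains A B where "A \<in> G" "B \<in> G" "upper_tri A" "upper_tri B"
    "\<And>w. w ^ 3 = 1 \<Longrightarrow> A ** B \<noteq> mat w ** (B ** A)"
proof -
  obtain A B where "A \<in> G" "B \<in> G" and noncomm: "\<And>w. w ^ 3 = 1 \<Longrightarrow> A ** B \<noteq> mat w ** (B ** A)"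
    using assms(3) unfolding noncommutative_psl_def by blast
  obtain a b where ab: "a ^ 3 = 1" "b ^ 3 = 1" and tri: "upper_tri (mat a ** A)" "upper_tri (mat b ** B)"
    using assms(2) \<open>A \<in> G\<close> \<open>B \<in> G\<close> unfolding in_Uplus_def by blast
  have "mat a \<in> G" "mat b \<in> G"
    using assms(1) ab unfolding psl_subgroup_def centre3_def by blast+
  then have G: "mat a ** A \<in> G" "mat b ** B \<in> G"
    using assms(1) \<open>A \<in> G\<close> \<open>B \<in> G\<close> unfolding psl_subgroup_def by blast+
  have "(mat a ** A) ** (mat b ** B) \<noteq> mat w ** ((mat b ** B) ** (mat a ** A))" if "w ^ 3 = 1" for w
  proof
    assume "(mat a ** A) ** (mat b ** B) = mat w ** ((mat b ** B) ** (mat a ** A))"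
    then have "mat (a * b) ** (A ** B) = mat (a * b) ** (mat w ** (B ** A))"
      by (simp add: scaled_mult_scaled mat_mult_mat mult_ac)
    moreover have "a * b \<noteq> 0"
      using ab by auto
    ultimately have "A ** B = mat w ** (B ** A)"
      by (rule mat_mult_cancel)
    then show False
      using noncomm that by blast
  qed
  then show thesis
    using that G tri by blast
qed

lemma parabolic_subgroup_ne_centre3:
  assumes "psl_subgroup G" "in_Uplus G" "noncommutative_psl G"
  shows "parabolic_subgroup G \<noteq> centre3"
proof -
  obtain A B where "A \<in> G" "B \<in> G" "upper_tri A" "upper_tri B"
    and noncomm: "\<And>w. w ^ 3 = 1 \<Longrightarrow> A ** B \<noteq> mat w ** (B ** A)"
    using noncommutative_upper_tri_pair[OF assms] by blast
  have inv: "invertible A" "invertible B"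
    using assms(1) \<open>A \<in> G\<close> \<open>B \<in> G\<close> unfolding psl_subgroup_def by (auto intro: SL3_invertible)
  define C where "C = A ** B ** matrix_inv A ** matrix_inv B"
  have "C \<in> G"
    using assms(1) \<open>A \<in> G\<close> \<open>B \<in> G\<close> unfolding psl_subgroup_def C_def by blast
  have "C \<notin> centre3"
  proof
    assume "C \<in> centre3"
    then obtain w where "C = mat w" "w ^ 3 = 1"
      unfolding centre3_def by blast
    then show False
      using commutator_mult_swap[OF inv] noncomm unfolding C_def by metis
  qed
  then have "C \<noteq> mat 1"
    unfolding centre3_def by auto
  then have "parabolic C"
    using commutator_unitriangular[OF \<open>upper_tri A\<close> \<open>upper_tri B\<close> inv] unitriangular_parabolic
    unfolding C_def by blast
  then have "C \<in> parabolic_subgroup G"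
    unfolding parabolic_subgroup_def using \<open>C \<in> G\<close> by (blast intro: psl_gen.gen)
  then show ?thesis
    using \<open>C \<notin> centre3\<close> by blast
qed

theorem mainTheorem5:
  fixes G :: "cmat set"
  assumes "complex_kleinian G"
    and "in_Uplus G"
    and "noncommutative_psl G"
    and "torsion_free_psl G"
    and "\<exists>W. discrete_add_subgroup W \<and> rank_le_2 W \<and>
           conjugate_psl (parabolic_subgroup G) (Gamma_W W)"
  shows "conjugate_psl (parabolic_subgroup G) (psl_gen {gxy 1 0, gxy 0 1})
       \<or> (\<exists>y. y \<notin> \<real> \<and> conjugate_psl (parabolic_subgroup G) (psl_gen {gxy 0 1, gxy 0 y}))
       \<or> (\<exists>x. x \<notin> \<real> \<and> conjugate_psl (parabolic_subgroup G) (psl_gen {gxy 1 0, gxy x 0}))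
       \<or> conjugate_psl (parabolic_subgroup G) (psl_gen {gxy 1 0})
       \<or> conjugate_psl (parabolic_subgroup G) (psl_gen {gxy 0 1})"
proof -
  let ?H = "parabolic_subgroup G"
  obtain W where W: "discrete_add_subgroup W" "rank_le_2 W" "conjugate_psl ?H (Gamma_W W)"
    using assms(5) by blast
  obtain a b where W_eq: "W = int_span2 a b"
    using W(2) unfolding rank_le_2_def int_span2_def by blast
  have "?H \<noteq> centre3"
    using assms(1-3) parabolic_subgroup_ne_centre3 unfolding complex_kleinian_def by blast
  then have "W \<noteq> {0}"
    using W(3) conjugate_psl_centre3 Gamma_W_zero by metis
  show ?thesis
  proof (cases "det2 a b = 0")
    case True
    then show ?thesis
      using conjugate_psl_Gamma_W_dependent[of ?H a b] W \<open>W \<noteq> {0}\<close> W_eq by blast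
  next
    case False
    then show ?thesis
      using conjugate_psl_Gamma_W_independent[of ?H a b] W(3) W_eq by blast
  qed
qed

end
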